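(* Let $D$ be a digraph, let $X \subseteq V(D)$, let $y \in V(D) \setminus X$, and let $\mathcal{P}$ and $\mathcal{Q}$ be $(X,y)$-path-systems in $D$. Then there is an $(X,y)$-path-system $\mathcal{R}$ in $D$ with $V^-(\mathcal{R}) \supseteq V^-(\mathcal{P})$ and $E^+(\mathcal{R}) \supseteq E^+(\mathcal{Q})$.
   Context: Digraphs have no loops or parallel edges. An $(X,y)$-path is a directed path whose initial vertex lies in $X$, whose terminal vertex is $y$, and which is internally disjoint from $X$. An $(X,y)$-path-system is a set of $(X,y)$-paths which are pairwise disjoint except for $y$. For a set $\mathcal{P}$ of paths, $V^-(\mathcal{P})$ is the set of initial vertices and $E^+(\mathcal{P})$ the set of terminal edges of the paths in $\mathcal{P}$. *)

theory Defs
  imports Main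
begin

definition digraph :: "'a set \<Rightarrow> ('a \<times> 'a) set \<Rightarrow> bool" where
  "digraph V E \<longleftrightarrow> finite V \<and> E \<subseteq> V \<times> V \<and> (\<forall>v. (v, v) \<notin> E)"

definition dpath :: "'a set \<Rightarrow> ('a \<times> 'a) set \<Rightarrow> 'a list \<Rightarrow> bool" where
  "dpath V E p \<longleftrightarrow> p \<noteq> [] \<and> distinct p \<and> set p \<subseteq> V \<and>
     (\<forall>i. Suc i < length p \<longrightarrow> (p ! i, p ! Suc i) \<in> E)"

definition XY_path :: "'a set \<Rightarrow> ('a \<times> 'a) set \<Rightarrow> 'a set \<Rightarrow> 'a \<Rightarrow> 'a list \<Rightarrow> bool" where
  "XY_path V E X y p \<longleftrightarrow> dpath V E p \<and> hd p \<in> X \<and> last p = y \<and>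
     (\<forall>v \<in> set (tl p). v \<notin> X)"

definition XY_path_system :: "'a set \<Rightarrow> ('a \<times> 'a) set \<Rightarrow> 'a set \<Rightarrow> 'a \<Rightarrow> 'a list set \<Rightarrow> bool" where
  "XY_path_system V E X y \<P> \<longleftrightarrow> (\<forall>p \<in> \<P>. XY_path V E X y p) \<and>
     (\<forall>p \<in> \<P>. \<forall>q \<in> \<P>. p \<noteq> q \<longrightarrow> set p \<inter> set q \<subseteq> {y})"

definition init_vertices :: "'a list set \<Rightarrow> 'a set" where
  "init_vertices \<P> = hd ` \<P>"

definition terminal_edges :: "'a list set \<Rightarrow> ('a \<times> 'a) set" where
  "terminal_edges \<P> = (\<lambda>p. (last (butlast p), last p)) ` \<P>"

end

theory Submission
  imports Defs
begin

text \<open>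
  Every path \<open>q \<in> \<Q>\<close> is cut at most once, at a vertex \<open>x \<noteq> y\<close> lying on some path \<open>p \<in> \<P>\<close>.
  The new system consists of the spliced paths that follow \<open>p\<close> up to \<open>x\<close> and then \<open>q\<close> from \<open>x\<close>
  on, the paths of \<open>\<Q>\<close> without cut and the paths of \<open>\<P>\<close> carrying no cut. It is an
  \<open>(X,y)\<close>-path-system provided (i) no vertex \<open>\<noteq> y\<close> of a kept tail of a path of \<open>\<Q>\<close> lies on a
  path of \<open>\<P>\<close> strictly before all cuts of that path, and (ii) no path of \<open>\<P>\<close> carries two cuts.

  Cutting every \<open>q\<close> at its last vertex in \<open>V(\<P>) - {y}\<close> gives (i). If two cuts \<open>x\<^sub>1\<close>, \<open>x\<^sub>2\<close>
  lie on one \<open>p\<close>, \<open>x\<^sub>1\<close> before \<open>x\<^sub>2\<close>, move the cut of the path through \<open>x\<^sub>2\<close> back to its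
  previous vertex in \<open>V(\<P>) - {y}\<close>, or drop it: (i) survives because \<open>x\<^sub>1\<close> still precedes
  everything that followed \<open>x\<^sub>2\<close> on \<open>p\<close>, and the total position of the cuts decreases.
  A cut assignment satisfying (i) with least total position therefore also satisfies (ii).
\<close>

definition index :: "'a list \<Rightarrow> 'a \<Rightarrow> nat" where
  "index xs a = length (takeWhile (\<lambda>u. u \<noteq> a) xs)"

lemma index_less_length: "a \<in> set xs \<Longrightarrow> index xs a < length xs"
  unfolding index_def by (induction xs) auto

lemma nth_index: "a \<in> set xs \<Longrightarrow> xs ! index xs a = a"
  unfolding index_def by (induction xs) auto

lemma index_nth: "distinct xs \<Longrightarrow> i < length xs \<Longrightarrow> index xs (xs ! i) = i"
proof (induction xs arbitrary: i)
  case (Cons b xs)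
  then show ?case by (cases i) (auto simp: index_def)
qed simp

lemma index_eq_iff: "a \<in> set xs \<Longrightarrow> b \<in> set xs \<Longrightarrow> index xs a = index xs b \<longleftrightarrow> a = b"
  by (metis nth_index)

lemma index_hd: "index xs (hd xs) = 0"
  unfolding index_def by (cases xs) auto

lemma index_le_index_last: "distinct xs \<Longrightarrow> a \<in> set xs \<Longrightarrow> index xs a \<le> index xs (last xs)"
  using index_less_length[of a xs] index_nth[of xs "length xs - 1"]
  by (cases "xs = []") (auto simp: last_conv_nth)

lemma set_take_index:
  assumes "distinct xs" "b \<in> set xs"
  shows "set (take (index xs b) xs) = {a \<in> set xs. index xs a < index xs b}"
proof (intro set_eqI iffI)
  fix a assume "a \<in> set (take (index xs b) xs)"
  then obtain i where "i < index xs b" "i < length xs" "xs ! i = a"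
    by (auto simp: in_set_conv_nth)
  then show "a \<in> {a \<in> set xs. index xs a < index xs b}"
    using index_nth[OF assms(1)] by auto
next
  fix a assume a: "a \<in> {a \<in> set xs. index xs a < index xs b}"
  then have "take (index xs b) xs ! index xs a = a"
    by (simp add: nth_index)
  moreover have "index xs a < length (take (index xs b) xs)"
    using a index_less_length[OF assms(2)] by simp
  ultimately show "a \<in> set (take (index xs b) xs)"
    by (metis nth_mem)
qed

lemma set_drop_index:
  assumes "distinct xs" "b \<in> set xs"
  shows "set (drop (index xs b) xs) = {a \<in> set xs. index xs b \<le> index xs a}"
proof -
  have "set xs = set (take (index xs b) xs) \<union> set (drop (index xs b) xs)"
    and "set (take (index xs b) xs) \<inter> set (drop (index xs b) xs) = {}"
    using assms(1) by (metis append_take_drop_id set_append distinct_append)+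
  then show ?thesis
    using set_take_index[OF assms] by (auto simp: not_less[symmetric])
qed

definition last_in :: "'a set \<Rightarrow> 'a list \<Rightarrow> 'a option" where
  "last_in S xs = (if set xs \<inter> S = {} then None else Some (last (filter (\<lambda>v. v \<in> S) xs)))"

lemma last_in_eq_None_iff: "last_in S xs = None \<longleftrightarrow> set xs \<inter> S = {}"
  unfolding last_in_def by simp

lemma last_in_SomeD:
  assumes "last_in S xs = Some x"
  shows "x \<in> set xs \<and> x \<in> S"
proof -
  have "filter (\<lambda>v. v \<in> S) xs \<noteq> []" "x = last (filter (\<lambda>v. v \<in> S) xs)"
    using assms unfolding last_in_def by (auto simp: filter_empty_conv split: if_splits)
  then show ?thesis
    using last_in_set by fastforce
qed

lemma index_le_last_in:
  assumes "distinct xs" "last_in S xs = Some x" "z \<in> set xs" "z \<in> S"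
  shows "index xs z \<le> index xs x"
  using assms
proof (induction xs arbitrary: x rule: rev_induct)
  case (snoc a xs)
  show ?case
  proof (cases "a \<in> S")
    case True
    then have "x = a"
      using snoc.prems(2) unfolding last_in_def by (auto split: if_splits)
    then show ?thesis
      using index_le_index_last[OF snoc.prems(1,3)] by simp
  next
    case False
    then have x: "last_in S xs = Some x" and z: "z \<in> set xs"
      using snoc.prems(2-4) unfolding last_in_def by (auto split: if_splits)
    have "index (xs @ [a]) v = index xs v" if "v \<in> set xs" for v
      using that unfolding index_def by simp
    then show ?thesis
      using snoc.IH[OF _ x z snoc.prems(4)] snoc.prems(1) z last_in_SomeD[OF x] by simp
  qed
qed simp

lemma dpath_iff_successively:
  "dpath V E p \<longleftrightarrow> p \<noteq> [] \<and> distinct p \<and> set p \<subseteq> V \<and> successively (\<lambda>a b. (a, b) \<in> E) p"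
  unfolding dpath_def successively_conv_nth by blast

lemma XY_path_system_unique:
  "XY_path_system V E X y \<P> \<Longrightarrow> p \<in> \<P> \<Longrightarrow> p' \<in> \<P> \<Longrightarrow> z \<in> set p \<Longrightarrow> z \<in> set p' \<Longrightarrow> z \<noteq> y
    \<Longrightarrow> p = p'"
  unfolding XY_path_system_def by blast

definition splice_at :: "'a list \<Rightarrow> 'a list \<Rightarrow> 'a \<Rightarrow> 'a list" where
  "splice_at p q x = take (index p x) p @ drop (index q x) q"

lemma hd_splice_at:
  assumes "x \<in> set p" "x \<in> set q"
  shows "hd (splice_at p q x) = hd p"
proof (cases "index p x = 0")
  case True
  then have "hd p = x"
    using nth_index[OF assms(1)] assms(1) by (cases p) auto
  then show ?thesis
    using True nth_index[OF assms(2)] index_less_length[OF assms(2)]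
    by (simp add: splice_at_def hd_drop_conv_nth)
next
  case False
  moreover have "p \<noteq> []"
    using assms(1) by auto
  ultimately show ?thesis
    by (simp add: splice_at_def)
qed

lemma last_splice_at:
  assumes "x \<in> set q" "x \<noteq> last q"
  shows "last (splice_at p q x) = last q"
    and "last (butlast (splice_at p q x)) = last (butlast q)"
proof -
  have "Suc (index q x) < length q"
    using assms index_less_length[OF assms(1)] nth_index[OF assms(1)]
    by (metis Suc_lessI diff_Suc_1 last_conv_nth list.size(3) not_less_zero)
  then show "last (splice_at p q x) = last q"
    and "last (butlast (splice_at p q x)) = last (butlast q)"
    by (simp_all add: splice_at_def butlast_append butlast_drop)
qed

lemma dpath_splice_at:
  assumes "dpath V E p" "dpath V E q" "x \<in> set p" "x \<in> set q"
    and "set (take (index p x) p) \<inter> set (drop (index q x) q) = {}"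
  shows "dpath V E (splice_at p q x)"
proof -
  let ?E = "\<lambda>a b. (a, b) \<in> E"
  let ?T = "take (index p x) p" and ?D = "drop (index q x) q"
  have "successively ?E ?T" "?T = [] \<or> ?E (last ?T) x"
    using assms(1) successively_append_iff[of ?E ?T "drop (index p x) p"]
      index_less_length[OF assms(3)] nth_index[OF assms(3)]
    by (auto simp: dpath_iff_successively hd_drop_conv_nth)
  moreover have "successively ?E ?D" "?D \<noteq> []" "hd ?D = x"
    using assms(2) successively_append_iff[of ?E "take (index q x) q" ?D]
      index_less_length[OF assms(4)] nth_index[OF assms(4)]
    by (auto simp: dpath_iff_successively hd_drop_conv_nth)
  ultimately have "successively ?E (splice_at p q x)"
    unfolding splice_at_def by (auto simp: successively_append_iff)
  moreover have "distinct (splice_at p q x)" "set (splice_at p q x) \<subseteq> V"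
    using assms(1,2,5) unfolding splice_at_def dpath_def
    by (auto dest: in_set_takeD in_set_dropD)
  ultimately show ?thesis
    using \<open>?D \<noteq> []\<close> by (simp add: dpath_iff_successively splice_at_def)
qed

lemma XY_path_mem_X: "XY_path V E X y p \<Longrightarrow> v \<in> set p \<Longrightarrow> v \<in> X \<Longrightarrow> v = hd p"
  unfolding XY_path_def by (cases p) auto

lemma XY_path_splice_at:
  assumes p: "XY_path V E X y p" and q: "XY_path V E X y q" and x: "x \<in> set p" "x \<in> set q"
    and disjoint: "set (take (index p x) p) \<inter> set (drop (index q x) q) = {}"
  shows "XY_path V E X y (splice_at p q x)"
proof -
  let ?s = "splice_at p q x"
  have dpath: "dpath V E ?s"
    using dpath_splice_at[OF _ _ x disjoint] p q unfolding XY_path_def by blast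
  have hd: "hd ?s = hd p"
    using hd_splice_at[OF x] .
  have "last ?s = last q"
    using index_less_length[OF x(2)] by (simp add: splice_at_def)
  moreover have "v \<notin> X" if v: "v \<in> set (tl ?s)" for v
  proof
    assume "v \<in> X"
    have "v \<noteq> hd p"
      using v dpath hd unfolding dpath_def by (cases ?s) auto
    then have "v \<notin> set (take (index p x) p)"
      using XY_path_mem_X[OF p _ \<open>v \<in> X\<close>] by (auto dest: in_set_takeD)
    moreover have "v \<in> set ?s"
      using v by (cases ?s) auto
    ultimately have "v \<in> set (drop (index q x) q)"
      unfolding splice_at_def by simp
    moreover have "v = hd q"
      using XY_path_mem_X[OF q _ \<open>v \<in> X\<close>] calculation by (auto dest: in_set_dropD)
    ultimately have "v = x"
      using q x(2) set_drop_index[of q x] index_hd[of q] index_eq_iff[of v q x]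
      unfolding XY_path_def dpath_def by auto
    then show False
      using XY_path_mem_X[OF p x(1)] \<open>v \<in> X\<close> \<open>v \<noteq> hd p\<close> by simp
  qed
  ultimately show ?thesis
    using dpath hd p q unfolding XY_path_def by auto
qed

locale two_XY_path_systems =
  fixes V :: "'a set" and E :: "('a \<times> 'a) set" and X :: "'a set" and y :: 'a
    and P Q :: "'a list set"
  assumes P_system: "XY_path_system V E X y P"
    and Q_system: "XY_path_system V E X y Q"
    and finite_Q: "finite Q"
begin

lemma P_path: "p \<in> P \<Longrightarrow> XY_path V E X y p"
  and Q_path: "q \<in> Q \<Longrightarrow> XY_path V E X y q"
  using P_system Q_system unfolding XY_path_system_def by blast+

lemma P_distinct: "p \<in> P \<Longrightarrow> distinct p"
  and Q_distinct: "q \<in> Q \<Longrightarrow> distinct q"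
  using P_path Q_path unfolding XY_path_def dpath_def by blast+

lemma P_unique: "p \<in> P \<Longrightarrow> p' \<in> P \<Longrightarrow> z \<in> set p \<Longrightarrow> z \<in> set p' \<Longrightarrow> z \<noteq> y \<Longrightarrow> p = p'"
  and Q_unique: "q \<in> Q \<Longrightarrow> q' \<in> Q \<Longrightarrow> z \<in> set q \<Longrightarrow> z \<in> set q' \<Longrightarrow> z \<noteq> y \<Longrightarrow> q = q'"
  using XY_path_system_unique[OF P_system] XY_path_system_unique[OF Q_system] by blast+

definition P_vertices :: "'a set" where
  "P_vertices = (\<Union>p\<in>P. set p) - {y}"

definition head_part :: "('a list \<Rightarrow> 'a option) \<Rightarrow> 'a list \<Rightarrow> 'a set" where
  "head_part f p = {z \<in> set p. \<forall>q\<in>Q. \<forall>x. f q = Some x \<longrightarrow> x \<in> set p \<longrightarrow> index p z < index p x}"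

definition tail_part :: "('a list \<Rightarrow> 'a option) \<Rightarrow> 'a list \<Rightarrow> 'a set" where
  "tail_part f q = {z \<in> set q. \<forall>x. f q = Some x \<longrightarrow> index q x \<le> index q z}"

definition admissible :: "('a list \<Rightarrow> 'a option) \<Rightarrow> bool" where
  "admissible f \<longleftrightarrow> (\<forall>q\<in>Q. \<forall>x. f q = Some x \<longrightarrow> x \<in> set q \<and> x \<in> P_vertices) \<and>
     (\<forall>p\<in>P. \<forall>q\<in>Q. head_part f p \<inter> tail_part f q \<subseteq> {y})"

definition separated :: "('a list \<Rightarrow> 'a option) \<Rightarrow> bool" where
  "separated f \<longleftrightarrow> (\<forall>q\<in>Q. \<forall>q'\<in>Q. \<forall>p\<in>P. \<forall>x x'.
     f q = Some x \<longrightarrow> f q' = Some x' \<longrightarrow> x \<in> set p \<longrightarrow> x' \<in> set p \<longrightarrow> q = q')"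

definition cut_weight :: "('a list \<Rightarrow> 'a option) \<Rightarrow> nat" where
  "cut_weight f = (\<Sum>q\<in>Q. case f q of None \<Rightarrow> 0 | Some x \<Rightarrow> Suc (index q x))"

lemma not_in_head_part_iff:
  "z \<in> set p \<Longrightarrow> z \<notin> head_part f p \<longleftrightarrow> (\<exists>q\<in>Q. \<exists>x. f q = Some x \<and> x \<in> set p \<and> index p x \<le> index p z)"
  unfolding head_part_def by (auto simp: not_less)

lemma admissibleI:
  assumes "\<And>q x. q \<in> Q \<Longrightarrow> f q = Some x \<Longrightarrow> x \<in> set q \<and> x \<in> P_vertices"
    and "\<And>p q z. p \<in> P \<Longrightarrow> q \<in> Q \<Longrightarrow> z \<in> tail_part f q \<Longrightarrow> z \<in> set p \<Longrightarrow> z \<noteq> y \<Longrightarrow>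
           \<exists>q'\<in>Q. \<exists>x'. f q' = Some x' \<and> x' \<in> set p \<and> index p x' \<le> index p z"
  shows "admissible f"
  unfolding admissible_def
proof (intro conjI ballI allI impI subsetI)
  fix p q z assume "p \<in> P" "q \<in> Q" and z: "z \<in> head_part f p \<inter> tail_part f q"
  then have "z \<in> set p"
    by (simp add: head_part_def)
  then show "z \<in> {y}"
    using assms(2)[OF \<open>p \<in> P\<close> \<open>q \<in> Q\<close>] not_in_head_part_iff[of z p f] z by blast
qed (use assms(1) in blast)+

lemma admissible_cutD:
  "admissible f \<Longrightarrow> q \<in> Q \<Longrightarrow> f q = Some x \<Longrightarrow> x \<in> set q \<and> x \<noteq> y \<and> (\<exists>p\<in>P. x \<in> set p)"
  unfolding admissible_def P_vertices_def by blast

lemma admissible_shieldD: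
  assumes "admissible f" "p \<in> P" "q \<in> Q" "z \<in> tail_part f q" "z \<in> set p" "z \<noteq> y"
  shows "\<exists>q'\<in>Q. \<exists>x'. f q' = Some x' \<and> x' \<in> set p \<and> index p x' \<le> index p z"
proof -
  have "z \<notin> head_part f p"
    using assms unfolding admissible_def by blast
  then show ?thesis
    using not_in_head_part_iff assms(5) by blast
qed

lemma admissible_last_in: "admissible (last_in P_vertices)"
proof (rule admissibleI)
  fix q x assume "last_in P_vertices q = Some x"
  then show "x \<in> set q \<and> x \<in> P_vertices"
    by (rule last_in_SomeD)
next
  fix p q z
  assume "p \<in> P" "q \<in> Q" and z: "z \<in> tail_part (last_in P_vertices) q" "z \<in> set p" "z \<noteq> y"
  then have "z \<in> P_vertices" "z \<in> set q"
    by (auto simp: P_vertices_def tail_part_def)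
  then obtain x where x: "last_in P_vertices q = Some x"
    using last_in_eq_None_iff by fastforce
  have "index q z \<le> index q x"
    using index_le_last_in[OF Q_distinct x] \<open>q \<in> Q\<close> \<open>z \<in> set q\<close> \<open>z \<in> P_vertices\<close> by simp
  moreover have "index q x \<le> index q z"
    using z(1) x by (simp add: tail_part_def)
  ultimately have "z = x"
    using index_eq_iff \<open>z \<in> set q\<close> last_in_SomeD[OF x] by (metis le_antisym)
  then show "\<exists>q'\<in>Q. \<exists>x'. last_in P_vertices q' = Some x' \<and> x' \<in> set p \<and> index p x' \<le> index p z"
    using \<open>q \<in> Q\<close> x z(2) by auto
qed

lemma admissible_move_cut:
  assumes f: "admissible f" and q: "q1 \<in> Q" "q2 \<in> Q" "q1 \<noteq> q2"
    and x: "f q1 = Some x1" "f q2 = Some x2"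
    and p: "p \<in> P" "x1 \<in> set p" "x2 \<in> set p" "index p x1 < index p x2"
  shows "\<exists>g. admissible g \<and> cut_weight g < cut_weight f"
proof -
  let ?S = "P_vertices \<inter> {z. index q2 z < index q2 x2}"
  define g where "g = f(q2 := last_in ?S q2)"
  have x2: "x2 \<in> set q2" "x2 \<noteq> y"
    using admissible_cutD[OF f q(2) x(2)] by auto
  have "admissible g"
  proof (rule admissibleI)
    fix q x assume "q \<in> Q" "g q = Some x"
    then show "x \<in> set q \<and> x \<in> P_vertices"
      using f last_in_SomeD[of ?S q2 x] unfolding admissible_def g_def by (auto split: if_splits)
  next
    fix p' q z
    assume p': "p' \<in> P" and "q \<in> Q" and z: "z \<in> tail_part g q" "z \<in> set p'" "z \<noteq> y"
    show "\<exists>q'\<in>Q. \<exists>x'. g q' = Some x' \<and> x' \<in> set p' \<and> index p' x' \<le> index p' z"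
    proof (cases "z \<in> tail_part f q")
      case True
      then obtain q' x' where q': "q' \<in> Q" "f q' = Some x'" "x' \<in> set p'" "index p' x' \<le> index p' z"
        using admissible_shieldD[OF f p' \<open>q \<in> Q\<close> _ z(2,3)] by blast
      show ?thesis
      proof (cases "q' = q2")
        case False
        then show ?thesis
          using q' by (auto simp: g_def)
      next
        case True
        then have "p' = p" "index p' x2 \<le> index p' z"
          using q' x(2) P_unique[OF p' p(1) _ p(3) x2(2)] by auto
        then show ?thesis
          using q(1,3) x(1) p(2,4) by (auto simp: g_def)
      qed
    next
      case False
      have "q = q2"
      proof (rule ccontr)
        assume "q \<noteq> q2"
        then have "tail_part g q = tail_part f q"
          by (simp add: tail_part_def g_def)
        then show False
          using False z(1) by simp
      qed
      then have "z \<in> set q2" "index q2 z < index q2 x2"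
        using False z(1) x(2) by (auto simp: tail_part_def)
      moreover have "z \<in> P_vertices"
        using p' z(2,3) by (auto simp: P_vertices_def)
      ultimately have "set q2 \<inter> ?S \<noteq> {}"
        by blast
      then obtain x' where x': "last_in ?S q2 = Some x'"
        by (cases "last_in ?S q2") (simp_all add: last_in_eq_None_iff)
      have "index q2 z \<le> index q2 x'"
        using index_le_last_in[OF Q_distinct[OF q(2)] x'] \<open>z \<in> set q2\<close> \<open>z \<in> P_vertices\<close>
          \<open>index q2 z < index q2 x2\<close> by simp
      moreover have "index q2 x' \<le> index q2 z"
        using z(1) x' \<open>q = q2\<close> by (simp add: g_def tail_part_def)
      ultimately have "z = x'"
        using index_eq_iff \<open>z \<in> set q2\<close> last_in_SomeD[OF x'] by (metis le_antisym)
      then show ?thesis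
        using q(2) x' z(2) by (auto simp: g_def)
    qed
  qed
  moreover have "cut_weight g < cut_weight f"
  proof -
    have "(case g q2 of None \<Rightarrow> 0 | Some x \<Rightarrow> Suc (index q2 x)) < Suc (index q2 x2)"
      using last_in_SomeD[of ?S q2] by (auto simp: g_def split: option.split)
    then show ?thesis
      unfolding cut_weight_def using finite_Q q(2) x(2)
      by (intro sum_strict_mono_ex1) (auto simp: g_def)
  qed
  ultimately show ?thesis
    by blast
qed

lemma admissible_separated_exists: "\<exists>f. admissible f \<and> separated f"
proof -
  obtain f where f: "admissible f" and least: "\<And>g. admissible g \<Longrightarrow> cut_weight f \<le> cut_weight g"
    using ex_has_least_nat[of admissible "last_in P_vertices" cut_weight] admissible_last_in
    by blast
  have "q = q'" if "q \<in> Q" "q' \<in> Q" "p \<in> P" "f q = Some x" "f q' = Some x'" "x \<in> set p" "x' \<in> set p"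
    for q q' p x x'
  proof (rule ccontr)
    assume "q \<noteq> q'"
    moreover have "x \<in> set q" "x' \<in> set q'" "x \<noteq> y"
      using admissible_cutD[OF f] that by blast+
    ultimately have "index p x \<noteq> index p x'"
      using index_eq_iff Q_unique that by metis
    have "\<exists>g. admissible g \<and> cut_weight g < cut_weight f"
    proof (cases "index p x < index p x'")
      case True
      then show ?thesis
        by (rule admissible_move_cut[OF f that(1,2) \<open>q \<noteq> q'\<close> that(4,5,3,6,7)])
    next
      case False
      then have "index p x' < index p x"
        using \<open>index p x \<noteq> index p x'\<close> by simp
      then show ?thesis
        using admissible_move_cut[OF f that(2,1) _ that(5,4,3,7,6)] \<open>q \<noteq> q'\<close> by blast
    qed
    then show False
      using least not_le by blast
  qed
  then show ?thesis
    using f unfolding separated_def by blast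
qed

definition head_route :: "('a list \<Rightarrow> 'a option) \<Rightarrow> 'a list \<Rightarrow> 'a list \<Rightarrow> bool" where
  "head_route f p r \<longleftrightarrow> (\<exists>q\<in>Q. \<exists>x. f q = Some x \<and> x \<in> set p \<and> r = splice_at p q x) \<or>
     (r = p \<and> (\<forall>q\<in>Q. \<forall>x. f q = Some x \<longrightarrow> x \<notin> set p))"

definition tail_route :: "('a list \<Rightarrow> 'a option) \<Rightarrow> 'a list \<Rightarrow> 'a list \<Rightarrow> bool" where
  "tail_route f q r \<longleftrightarrow> (\<exists>p\<in>P. \<exists>x. f q = Some x \<and> x \<in> set p \<and> r = splice_at p q x) \<or>
     (r = q \<and> f q = None)"

definition rerouted :: "('a list \<Rightarrow> 'a option) \<Rightarrow> 'a list set" where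
  "rerouted f = {r. (\<exists>p\<in>P. head_route f p r) \<or> (\<exists>q\<in>Q. tail_route f q r)}"

lemma rerouted_cases:
  assumes "r \<in> rerouted f"
  obtains (splice) p q x where "p \<in> P" "q \<in> Q" "f q = Some x" "x \<in> set p" "r = splice_at p q x"
    | (uncut_P) "r \<in> P" "\<forall>q\<in>Q. \<forall>x. f q = Some x \<longrightarrow> x \<notin> set r"
    | (uncut_Q) "r \<in> Q" "f r = None"
  using assms unfolding rerouted_def head_route_def tail_route_def by auto

context
  fixes f :: "'a list \<Rightarrow> 'a option"
  assumes admissible: "admissible f" and separated: "separated f"
begin

lemma set_take_subset_head_part:
  assumes "p \<in> P" "q \<in> Q" "f q = Some x" "x \<in> set p"
  shows "set (take (index p x) p) \<subseteq> head_part f p"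
proof
  fix z assume z: "z \<in> set (take (index p x) p)"
  have "x' = x" if "q' \<in> Q" "f q' = Some x'" "x' \<in> set p" for q' x'
    using separated assms that unfolding separated_def by (metis option.inject)
  then show "z \<in> head_part f p"
    using z set_take_index[OF P_distinct assms(4)] assms(1) by (auto simp: head_part_def)
qed

lemma set_drop_eq_tail_part:
  assumes "q \<in> Q" "f q = Some x"
  shows "set (drop (index q x) q) = tail_part f q"
  using set_drop_index[OF Q_distinct] admissible_cutD[OF admissible] assms
  by (simp add: tail_part_def)

lemma XY_path_splice_cut:
  assumes p: "p \<in> P" and q: "q \<in> Q" and x: "f q = Some x" "x \<in> set p"
  shows "XY_path V E X y (splice_at p q x)"
proof (rule XY_path_splice_at[OF P_path[OF p] Q_path[OF q] x(2)])
  show "x \<in> set q"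
    using admissible_cutD[OF admissible q x(1)] by blast
  have "y \<notin> set (take (index p x) p)"
    using P_path[OF p] index_le_index_last[OF P_distinct[OF p] x(2)]
      set_take_index[OF P_distinct[OF p] x(2)] unfolding XY_path_def by auto
  moreover have "head_part f p \<inter> tail_part f q \<subseteq> {y}"
    using admissible p q unfolding admissible_def by blast
  ultimately show "set (take (index p x) p) \<inter> set (drop (index q x) q) = {}"
    using set_take_subset_head_part[OF p q x] set_drop_eq_tail_part[OF q x(1)] by blast
qed

lemma rerouted_XY_path: "r \<in> rerouted f \<Longrightarrow> XY_path V E X y r"
  by (cases rule: rerouted_cases) (auto intro: XY_path_splice_cut P_path Q_path)

lemma rerouted_vertex_cases:
  assumes "r \<in> rerouted f" "z \<in> set r" "z \<noteq> y"
  shows "(\<exists>p\<in>P. z \<in> head_part f p \<and> head_route f p r) \<or> (\<exists>q\<in>Q. z \<in> tail_part f q \<and> tail_route f q r)"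
  using assms(1)
proof (cases rule: rerouted_cases)
  case (splice p q x)
  then have "head_route f p r" "tail_route f q r"
    unfolding head_route_def tail_route_def by blast+
  moreover have "z \<in> set (take (index p x) p) \<or> z \<in> set (drop (index q x) q)"
    using assms(2) splice(5) by (simp add: splice_at_def)
  ultimately show ?thesis
    using set_take_subset_head_part[OF splice(1-4)] set_drop_eq_tail_part[OF splice(2,3)] splice(1,2)
    by blast
next
  case uncut_P
  then have "z \<in> head_part f r" "head_route f r r"
    using assms(2) by (auto simp: head_part_def head_route_def)
  then show ?thesis
    using uncut_P(1) by blast
next
  case uncut_Q
  then have "z \<in> tail_part f r" "tail_route f r r"
    using assms(2) by (auto simp: tail_part_def tail_route_def)
  then show ?thesis
    using uncut_Q(1) by blast
qed

lemma head_route_unique: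
  assumes "p \<in> P" "head_route f p r" "head_route f p r'"
  shows "r = r'"
proof -
  have "q = q' \<and> x = x'"
    if "q \<in> Q" "q' \<in> Q" "f q = Some x" "f q' = Some x'" "x \<in> set p" "x' \<in> set p" for q q' x x'
    using separated assms(1) that unfolding separated_def by fastforce
  then show ?thesis
    using assms(2,3) unfolding head_route_def by blast
qed

lemma tail_route_unique:
  assumes "q \<in> Q" "tail_route f q r" "tail_route f q r'"
  shows "r = r'"
  using assms(2,3) P_unique admissible_cutD[OF admissible assms(1)] unfolding tail_route_def
  by (metis option.distinct(1) option.inject)

lemma rerouted_unique:
  assumes "r \<in> rerouted f" "r' \<in> rerouted f" "z \<in> set r" "z \<in> set r'" "z \<noteq> y"
  shows "r = r'"
proof -
  have head_tail: False if "p \<in> P" "q \<in> Q" "z \<in> head_part f p" "z \<in> tail_part f q" for p q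
    using admissible that assms(5) unfolding admissible_def by blast
  have heads: "p = p'" if "p \<in> P" "p' \<in> P" "z \<in> head_part f p" "z \<in> head_part f p'" for p p'
    using P_unique that assms(5) by (auto simp: head_part_def)
  have tails: "q = q'" if "q \<in> Q" "q' \<in> Q" "z \<in> tail_part f q" "z \<in> tail_part f q'" for q q'
    using Q_unique that assms(5) by (auto simp: tail_part_def)
  have "(\<exists>p\<in>P. head_route f p r \<and> head_route f p r') \<or> (\<exists>q\<in>Q. tail_route f q r \<and> tail_route f q r')"
    using rerouted_vertex_cases[OF assms(1,3,5)] rerouted_vertex_cases[OF assms(2,4,5)]
      head_tail heads tails by blast
  then show ?thesis
    using head_route_unique tail_route_unique by blast
qed

lemma XY_path_system_rerouted: "XY_path_system V E X y (rerouted f)"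
  unfolding XY_path_system_def using rerouted_XY_path rerouted_unique by blast

lemma init_vertices_rerouted: "init_vertices P \<subseteq> init_vertices (rerouted f)"
proof
  fix a assume "a \<in> init_vertices P"
  then obtain p where p: "p \<in> P" "a = hd p"
    by (auto simp: init_vertices_def)
  show "a \<in> init_vertices (rerouted f)"
  proof (cases "\<exists>q\<in>Q. \<exists>x. f q = Some x \<and> x \<in> set p")
    case True
    then obtain q x where q: "q \<in> Q" "f q = Some x" "x \<in> set p"
      by blast
    then have "splice_at p q x \<in> rerouted f"
      using p(1) by (auto simp: rerouted_def head_route_def)
    moreover have "hd (splice_at p q x) = a"
      using hd_splice_at[OF q(3)] admissible_cutD[OF admissible q(1,2)] p(2) by simp
    ultimately show ?thesis
      unfolding init_vertices_def by (metis image_eqI)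
  next
    case False
    then have "p \<in> rerouted f"
      using p(1) by (auto simp: rerouted_def head_route_def)
    then show ?thesis
      using p(2) by (auto simp: init_vertices_def)
  qed
qed

lemma terminal_edges_rerouted: "terminal_edges Q \<subseteq> terminal_edges (rerouted f)"
proof
  fix e assume "e \<in> terminal_edges Q"
  then obtain q where q: "q \<in> Q" "e = (last (butlast q), last q)"
    by (auto simp: terminal_edges_def)
  show "e \<in> terminal_edges (rerouted f)"
  proof (cases "f q")
    case None
    then have "q \<in> rerouted f"
      using q(1) by (auto simp: rerouted_def tail_route_def)
    then show ?thesis
      using q(2) by (auto simp: terminal_edges_def)
  next
    case (Some x)
    then obtain p where p: "p \<in> P" "x \<in> set p" and x: "x \<in> set q" "x \<noteq> last q"
      using admissible_cutD[OF admissible q(1)] Q_path[OF q(1)] by (auto simp: XY_path_def)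
    then have "splice_at p q x \<in> rerouted f"
      using q(1) Some by (auto simp: rerouted_def tail_route_def)
    moreover have "e = (last (butlast (splice_at p q x)), last (splice_at p q x))"
      using last_splice_at[OF x] q(2) by simp
    ultimately show ?thesis
      unfolding terminal_edges_def by blast
  qed
qed

end

theorem rerouting_exists:
  "\<exists>R. XY_path_system V E X y R \<and> init_vertices P \<subseteq> init_vertices R \<and> terminal_edges Q \<subseteq> terminal_edges R"
  using admissible_separated_exists XY_path_system_rerouted init_vertices_rerouted terminal_edges_rerouted
  by blast

end

theorem corollary2p3:
  fixes V :: "'a set" and E :: "('a \<times> 'a) set" and X :: "'a set" and y :: 'a
    and \<P> \<Q> :: "'a list set"
  assumes "digraph V E"
    and "X \<subseteq> V" and "y \<in> V" and "y \<notin> X"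
    and "XY_path_system V E X y \<P>"
    and "XY_path_system V E X y \<Q>"
  shows "\<exists>\<R>. XY_path_system V E X y \<R> \<and>
           init_vertices \<P> \<subseteq> init_vertices \<R> \<and>
           terminal_edges \<Q> \<subseteq> terminal_edges \<R>"
proof -
  have "\<Q> \<subseteq> {xs. set xs \<subseteq> V \<and> distinct xs}"
    using assms(6) unfolding XY_path_system_def XY_path_def dpath_def by blast
  then have "finite \<Q>"
    using assms(1) finite_subset_distinct finite_subset unfolding digraph_def by blast
  then interpret two_XY_path_systems V E X y \<P> \<Q>
    using assms(5,6) by unfold_locales
  show ?thesis
    by (rule rerouting_exists)
qed

end
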